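(* Let $T$ be a tree of order $n\ge 3$. Then $\chi'_{qm\Sigma}(T)=2$ if $T$ has no two adjacent vertices of equal even degree, and $\chi'_{qm\Sigma}(T)=3$ otherwise.
   Context: A $k$-edge-coloring of $G$ is any map $c:E(G)\to\{1,\dots,k\}$ (adjacent edges may share colors). It induces $\sigma_c(v)=\sum_{u\in N(v)}c(vu)$. The coloring is neighbor sum distinguishing (NSD) if $\sigma_c(u)\ne\sigma_c(v)$ for every edge $uv$. It is quasi-majority if every vertex $v$ is incident to at most $\lceil d(v)/2\rceil$ edges of each single color. $\chi'_{qm\Sigma}(G)$ denotes the least $k$ such that $G$ has a $k$-edge-coloring that is both quasi-majority and NSD. *)

theory Defs
  imports Complex_Main
begin

definition simple_graph :: "'a set \<Rightarrow> 'a set set \<Rightarrow> bool" where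
  "simple_graph V E \<longleftrightarrow> finite V \<and> (\<forall>e\<in>E. e \<subseteq> V \<and> card e = 2)"

definition nbhd :: "'a set set \<Rightarrow> 'a \<Rightarrow> 'a set" where
  "nbhd E v = {u. {v, u} \<in> E}"

definition deg :: "'a set set \<Rightarrow> 'a \<Rightarrow> nat" where
  "deg E v = card (nbhd E v)"

definition connected_graph :: "'a set \<Rightarrow> 'a set set \<Rightarrow> bool" where
  "connected_graph V E \<longleftrightarrow>
     (\<forall>u\<in>V. \<forall>v\<in>V. (u, v) \<in> {(x, y). {x, y} \<in> E}\<^sup>*)"

definition is_cycle :: "'a set set \<Rightarrow> 'a list \<Rightarrow> bool" where
  "is_cycle E vs \<longleftrightarrow> length vs \<ge> 3 \<and> distinct vs \<and>
     (\<forall>i. i + 1 < length vs \<longrightarrow> {vs ! i, vs ! (i + 1)} \<in> E) \<and>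
     {last vs, hd vs} \<in> E"

definition acyclic_graph :: "'a set \<Rightarrow> 'a set set \<Rightarrow> bool" where
  "acyclic_graph V E \<longleftrightarrow> \<not> (\<exists>vs. set vs \<subseteq> V \<and> is_cycle E vs)"

definition is_tree :: "'a set \<Rightarrow> 'a set set \<Rightarrow> bool" where
  "is_tree V E \<longleftrightarrow> simple_graph V E \<and> V \<noteq> {} \<and> connected_graph V E \<and> acyclic_graph V E"

definition edge_coloring :: "'a set set \<Rightarrow> nat \<Rightarrow> ('a set \<Rightarrow> nat) \<Rightarrow> bool" where
  "edge_coloring E k c \<longleftrightarrow> (\<forall>e\<in>E. c e \<in> {1..k})"

definition sigma :: "'a set set \<Rightarrow> ('a set \<Rightarrow> nat) \<Rightarrow> 'a \<Rightarrow> nat" where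
  "sigma E c v = (\<Sum>u\<in>nbhd E v. c {v, u})"

definition nsd :: "'a set set \<Rightarrow> ('a set \<Rightarrow> nat) \<Rightarrow> bool" where
  "nsd E c \<longleftrightarrow> (\<forall>u v. {u, v} \<in> E \<longrightarrow> sigma E c u \<noteq> sigma E c v)"

definition quasi_majority :: "'a set \<Rightarrow> 'a set set \<Rightarrow> ('a set \<Rightarrow> nat) \<Rightarrow> bool" where
  "quasi_majority V E c \<longleftrightarrow>
     (\<forall>v\<in>V. \<forall>i. card {u \<in> nbhd E v. c {v, u} = i} \<le> nat \<lceil>real (deg E v) / 2\<rceil>)"

definition chi_qm_sigma :: "'a set \<Rightarrow> 'a set set \<Rightarrow> nat" where
  "chi_qm_sigma V E = (LEAST k. \<exists>c. edge_coloring E k c \<and> quasi_majority V E c \<and> nsd E c)"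

end

theory Submission
  imports Defs
begin

(* Root the tree and colour it from the root downwards. When a vertex v is reached, the colour a
   of the edge to its parent is already fixed, and the colours of the edges to its children are
   chosen so that the colours at v are quasi-majority and their sum differs from the already fixed
   sum at the parent. A leaf needs no choice: its parent has degree at least 2, so the parent's
   sum exceeds a. With colours {1,2,3} two admissible choices with different sums always exist.
   With colours {1,2} the only obstruction is a vertex of even degree d, whose sum is forced to be
   3d/2; this collides with the parent's sum only if the parent has degree d as well. The same
   forcing shows that two colours fail when adjacent vertices have equal even degree, and a single
   colour fails at any vertex of degree at least 2. *)

section \<open>Quasi-majority lists of colours\<close>

lemma nat_ceiling_half: "nat \<lceil>real d / 2\<rceil> = (d + 1) div 2"
proof (cases "even d")
  case True
  then show ?thesis by (auto elim: evenE)
next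
  case False
  then obtain k where "d = 2 * k + 1" by (auto elim: oddE)
  moreover have "\<lceil>real (2 * k + 1) / 2\<rceil> = int k + 1" by (simp add: ceiling_eq_iff)
  ultimately show ?thesis by simp
qed

definition qm_list :: "nat list \<Rightarrow> bool" where
  "qm_list xs \<longleftrightarrow> (\<forall>i. count_list xs i \<le> (length xs + 1) div 2)"

lemma count_list_replicate [simp]: "count_list (replicate n x) y = (if x = y then n else 0)"
  by (induction n) auto

lemma count_list_eq_sum_list: "count_list xs i = (\<Sum>x\<leftarrow>xs. if x = i then 1 else 0)"
  by (induction xs) auto

lemma ex_map_eq:
  assumes "distinct xs" "length ys = length xs"
  shows "\<exists>f. map f xs = ys"
proof -
  have "map (\<lambda>x. the (map_of (zip xs ys) x)) xs = ys"
    using assms by (intro nth_equalityI) (auto simp: map_of_zip_nth)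
  then show ?thesis by blast
qed

lemma ex_qm_list_12: "\<exists>xs. length xs = m \<and> set xs \<subseteq> {1, 2} \<and> qm_list xs"
  by (rule exI[of _ "replicate (m div 2) 1 @ replicate (m - m div 2) 2"]) (auto simp: qm_list_def)

lemma sum_list_neq_member:
  fixes xs :: "nat list"
  assumes "a \<in> set xs" "2 \<le> length xs" "0 \<notin> set xs"
  shows "sum_list xs \<noteq> a"
proof -
  have "sum_list xs = a + sum_list (remove1 a xs)"
    using sum_list_map_remove1[OF assms(1), of id] by simp
  moreover have "remove1 a xs \<noteq> []"
    using assms(1,2) by (auto simp: length_remove1 simp flip: length_0_conv)
  then have "sum_list (remove1 a xs) \<noteq> 0"
    using assms(3) by (metis list.set_sel(1) notin_set_remove1 sum_list_eq_0_iff)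
  ultimately show ?thesis by simp
qed

lemma ex_qm_list_123_avoiding:
  assumes a: "a \<in> {1, 2, 3 :: nat}" and m: "1 \<le> m"
  shows "\<exists>xs. length xs = m \<and> set xs \<subseteq> {1, 2, 3} \<and> qm_list (a # xs) \<and> sum_list (a # xs) \<noteq> s"
proof -
  define b :: nat where "b = (if a = 1 then 2 else 1)"
  define b' :: nat where "b' = (if a = 3 then 2 else 3)"
  have distinct: "a \<noteq> b" "a \<noteq> b'" "b \<noteq> b'" and range: "b \<in> {1, 2, 3}" "b' \<in> {1, 2, 3}"
    using a unfolding b_def b'_def by auto
  define xs where "xs = replicate (m div 2) a @ replicate (m - m div 2) b"
  define ys where "ys = replicate (m div 2) a @ b' # replicate (m - m div 2 - 1) b"
  have "length xs = m" "length ys = m" "set xs \<subseteq> {1, 2, 3}" "set ys \<subseteq> {1, 2, 3}"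
    using m a range unfolding xs_def ys_def by auto
  moreover have "qm_list (a # xs)" "qm_list (a # ys)"
    using distinct m unfolding qm_list_def xs_def ys_def by auto
  moreover have "sum_list (a # xs) + b' = sum_list (a # ys) + b"
    unfolding xs_def ys_def using m by (cases "m - m div 2") (auto simp: sum_list_replicate)
  then have "sum_list (a # xs) \<noteq> sum_list (a # ys)"
    using distinct by auto
  ultimately show ?thesis by metis
qed

lemma qm_list_12_sum_bounds:
  assumes "set xs \<subseteq> {1, 2 :: nat}" "qm_list xs"
  shows "3 * length xs \<le> 2 * sum_list xs + 1" "2 * sum_list xs \<le> 3 * length xs + 1"
proof -
  have "sum_list xs = count_list xs 1 + 2 * count_list xs 2"
    "length xs = count_list xs 1 + count_list xs 2"
    using assms(1) by (induction xs) auto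
  moreover have "count_list xs 1 \<le> (length xs + 1) div 2" "count_list xs 2 \<le> (length xs + 1) div 2"
    using assms(2) unfolding qm_list_def by auto
  ultimately show "3 * length xs \<le> 2 * sum_list xs + 1" "2 * sum_list xs \<le> 3 * length xs + 1"
    by linarith+
qed

text \<open>For odd \<open>m\<close> the list \<open>a # xs\<close> has even length, so it contains \<open>1\<close> and \<open>2\<close> equally
  often and its sum is forced to be \<open>3 (m + 1) / 2\<close>.\<close>
lemma ex_qm_list_12_avoiding:
  assumes a: "a \<in> {1, 2 :: nat}" and m: "1 \<le> m" and odd: "odd m \<Longrightarrow> 2 * s \<noteq> 3 * (m + 1)"
  shows "\<exists>xs. length xs = m \<and> set xs \<subseteq> {1, 2} \<and> qm_list (a # xs) \<and> sum_list (a # xs) \<noteq> s"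
proof -
  define b :: nat where "b = 3 - a"
  have b: "a \<noteq> b" "a + b = 3" "b \<in> {1, 2}"
    using a unfolding b_def by auto
  show ?thesis
  proof (cases "odd m")
    case True
    define xs where "xs = replicate (m div 2) a @ replicate (m div 2 + 1) b"
    have m2: "m = 2 * (m div 2) + 1"
      using True by presburger
    have "length xs = m" "set xs \<subseteq> {1, 2}" "qm_list (a # xs)"
      using m2 a b unfolding xs_def qm_list_def by auto
    moreover have "sum_list (a # xs) = (m div 2 + 1) * (a + b)"
      unfolding xs_def by (simp add: sum_list_replicate algebra_simps)
    then have "2 * sum_list (a # xs) = 3 * (m + 1)"
      using b m2 by simp
    ultimately show ?thesis
      using odd True by metis
  next
    case False
    define xs where "xs = replicate (m div 2) a @ replicate (m div 2) b"
    define ys where "ys = replicate (m div 2 - 1) a @ replicate (m div 2 + 1) b"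
    have m2: "m = 2 * (m div 2)" "1 \<le> m div 2"
      using False m by presburger+
    have "length xs = m" "length ys = m" "set xs \<subseteq> {1, 2}" "set ys \<subseteq> {1, 2}"
      using m2 a b unfolding xs_def ys_def by auto
    moreover have "qm_list (a # xs)" "qm_list (a # ys)"
      using m2 b unfolding qm_list_def xs_def ys_def by auto
    moreover have "sum_list (a # xs) + b = sum_list (a # ys) + a"
      unfolding xs_def ys_def using m2
      by (cases "m div 2") (auto simp: sum_list_replicate algebra_simps)
    then have "sum_list (a # xs) \<noteq> sum_list (a # ys)"
      using b by auto
    ultimately show ?thesis by metis
  qed
qed

section \<open>Lower bounds\<close>

lemma simple_graph_edgeD:
  assumes "simple_graph V E" "{u, v} \<in> E"
  shows "u \<in> V" "v \<in> V" "u \<noteq> v"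
  using assms unfolding simple_graph_def by (auto simp: card_insert_if split: if_splits)

lemma quasi_majority_colors_ge_2:
  assumes c: "edge_coloring E k c" "quasi_majority V E c" and v: "v \<in> V" "2 \<le> deg E v"
  shows "2 \<le> k"
proof (rule ccontr)
  assume "\<not> 2 \<le> k"
  then have "c {v, u} = 1" if "u \<in> nbhd E v" for u
    using that c(1) unfolding nbhd_def edge_coloring_def by fastforce
  then have "{u \<in> nbhd E v. c {v, u} = 1} = nbhd E v" by blast
  then have "deg E v \<le> (deg E v + 1) div 2"
    using c(2) v(1) unfolding quasi_majority_def nat_ceiling_half deg_def by metis
  then show False using v(2) by linarith
qed

lemma sigma_qm_2_coloring_even_deg:
  assumes "simple_graph V E" "w \<in> V" and c: "edge_coloring E 2 c" "quasi_majority V E c"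
    and even: "even (deg E w)"
  shows "2 * sigma E c w = 3 * deg E w"
proof -
  let ?A = "nbhd E w"
  define A1 where "A1 = {u \<in> ?A. c {w, u} = 1}"
  define A2 where "A2 = {u \<in> ?A. c {w, u} = 2}"
  have "?A \<subseteq> V"
    using assms(1) unfolding nbhd_def simple_graph_def by auto
  then have fin: "finite A1" "finite A2"
    using assms(1) unfolding A1_def A2_def simple_graph_def by (auto intro: finite_subset)
  have split: "?A = A1 \<union> A2" "A1 \<inter> A2 = {}"
    using c(1) unfolding A1_def A2_def nbhd_def edge_coloring_def by fastforce+
  have "sigma E c w = card A1 + 2 * card A2"
    unfolding sigma_def split(1) using split(2) fin by (simp add: sum.union_disjoint A1_def A2_def)
  moreover have deg: "deg E w = card A1 + card A2"
    unfolding deg_def split(1) using split(2) fin by (simp add: card_Un_disjoint)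
  moreover have "card A1 \<le> (deg E w + 1) div 2" "card A2 \<le> (deg E w + 1) div 2"
    using c(2) assms(2) unfolding quasi_majority_def nat_ceiling_half A1_def A2_def by blast+
  moreover obtain k where "deg E w = 2 * k"
    using even by (elim evenE)
  moreover have "(2 * k + 1) div 2 = k" by simp
  ultimately show ?thesis by (simp only:) presburger
qed

definition qm_nsd_colorable :: "'a set \<Rightarrow> 'a set set \<Rightarrow> nat \<Rightarrow> bool" where
  "qm_nsd_colorable V E k \<longleftrightarrow> (\<exists>c. edge_coloring E k c \<and> quasi_majority V E c \<and> nsd E c)"

lemma qm_nsd_colorable_mono:
  "qm_nsd_colorable V E k \<Longrightarrow> k \<le> l \<Longrightarrow> qm_nsd_colorable V E l"
  unfolding qm_nsd_colorable_def edge_coloring_def by fastforce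

lemma chi_qm_sigma_eqI:
  assumes "qm_nsd_colorable V E k" "\<And>j. j < k \<Longrightarrow> \<not> qm_nsd_colorable V E j"
  shows "chi_qm_sigma V E = k"
  unfolding chi_qm_sigma_def using assms
  by (intro Least_equality) (auto simp: qm_nsd_colorable_def not_less[symmetric])

lemma not_qm_nsd_colorable_lt_2:
  "v \<in> V \<Longrightarrow> 2 \<le> deg E v \<Longrightarrow> k < 2 \<Longrightarrow> \<not> qm_nsd_colorable V E k"
  using quasi_majority_colors_ge_2 unfolding qm_nsd_colorable_def by fastforce

lemma not_qm_nsd_colorable_2:
  assumes simple: "simple_graph V E" and uv: "{u, v} \<in> E" "deg E u = deg E v" "even (deg E u)"
  shows "\<not> qm_nsd_colorable V E 2"
proof
  assume "qm_nsd_colorable V E 2"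
  then obtain c where c: "edge_coloring E 2 c" "quasi_majority V E c" "nsd E c"
    unfolding qm_nsd_colorable_def by blast
  have "2 * sigma E c u = 3 * deg E u"
    using sigma_qm_2_coloring_even_deg[OF simple simple_graph_edgeD(1)[OF simple uv(1)] c(1,2) uv(3)] .
  moreover have "2 * sigma E c v = 3 * deg E v"
    using sigma_qm_2_coloring_even_deg[OF simple simple_graph_edgeD(2)[OF simple uv(1)] c(1,2)] uv(2,3)
    by simp
  ultimately have "sigma E c u = sigma E c v"
    using uv(2) by simp
  then show False
    using c(3) uv(1) unfolding nsd_def by blast
qed

section \<open>Rooting a tree\<close>

lemma card_2_member_eq:
  assumes "card e = 2" "x \<in> e"
  shows "\<exists>y. e = {x, y}"
  using assms by (metis card_2_iff insert_commute insertE singletonD)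

definition is_path :: "'a set set \<Rightarrow> 'a list \<Rightarrow> bool" where
  "is_path E vs \<longleftrightarrow> distinct vs \<and> (\<forall>i. i + 1 < length vs \<longrightarrow> {vs ! i, vs ! (i + 1)} \<in> E)"

lemma is_path_Cons:
  assumes "is_path E vs" "y \<notin> set vs" "{y, vs ! 0} \<in> E"
  shows "is_path E (y # vs)"
  unfolding is_path_def
proof (intro conjI allI impI)
  show "distinct (y # vs)" using assms(1,2) unfolding is_path_def by simp
next
  fix i assume "i + 1 < length (y # vs)"
  then show "{(y # vs) ! i, (y # vs) ! (i + 1)} \<in> E"
    using assms(1,3) unfolding is_path_def by (cases i) auto
qed

lemma is_cycle_take_path:
  assumes "is_path E vs" "2 \<le> j" "j < length vs" "{vs ! j, vs ! 0} \<in> E"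
  shows "is_cycle E (take (Suc j) vs)"
proof -
  have "take (Suc j) vs \<noteq> []" "length (take (Suc j) vs) = Suc j"
    using assms(3) by auto
  then have "last (take (Suc j) vs) = vs ! j" "hd (take (Suc j) vs) = vs ! 0"
    by (simp_all add: last_conv_nth hd_conv_nth)
  then show ?thesis
    using assms unfolding is_cycle_def is_path_def by auto
qed

lemma ex_longest_path:
  assumes sg: "simple_graph V E" and "E \<noteq> {}"
  shows "\<exists>vs. set vs \<subseteq> V \<and> is_path E vs \<and> 2 \<le> length vs \<and>
    (\<forall>ws. set ws \<subseteq> V \<longrightarrow> is_path E ws \<longrightarrow> length ws \<le> length vs)"
proof -
  define paths where "paths = {vs. set vs \<subseteq> V \<and> is_path E vs}"
  obtain x y where "{x, y} \<in> E"
    using \<open>E \<noteq> {}\<close> sg unfolding simple_graph_def by (metis card_2_iff ex_in_conv)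
  then have xy: "[x, y] \<in> paths"
    using simple_graph_edgeD[OF sg] unfolding paths_def is_path_def by (auto simp: less_Suc_eq)
  moreover have "length vs < Suc (card V)" if "vs \<in> paths" for vs
  proof -
    have "length vs = card (set vs)"
      using that distinct_card[of vs] unfolding paths_def is_path_def by simp
    also have "\<dots> \<le> card V"
      using that sg unfolding paths_def simple_graph_def by (simp add: card_mono)
    finally show ?thesis by simp
  qed
  ultimately obtain vs where "vs \<in> paths" and longest: "\<forall>ws. ws \<in> paths \<longrightarrow> length ws \<le> length vs"
    using ex_has_greatest_nat[of "\<lambda>vs. vs \<in> paths" "[x, y]" length "Suc (card V)"] by blast
  moreover have "2 \<le> length vs"
    using longest xy by fastforce
  ultimately show ?thesis
    unfolding paths_def by blast
qed

text \<open>An end of a longest path is a leaf: a further neighbour would extend the path or close a cycle.\<close>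
lemma acyclic_ex_leaf:
  assumes sg: "simple_graph V E" and ac: "acyclic_graph V E" and "E \<noteq> {}"
  shows "\<exists>l w. l \<in> V \<and> nbhd E l = {w}"
proof -
  obtain vs where path: "set vs \<subseteq> V" "is_path E vs" "2 \<le> length vs"
    and longest: "\<And>ws. set ws \<subseteq> V \<Longrightarrow> is_path E ws \<Longrightarrow> length ws \<le> length vs"
    using ex_longest_path[OF sg \<open>E \<noteq> {}\<close>] by blast
  have "0 < length vs" using path(3) by linarith
  then have "vs ! 0 \<in> V" using path(1) by (meson nth_mem subsetD)
  moreover have "nbhd E (vs ! 0) = {vs ! 1}"
  proof (intro set_eqI iffI)
    fix y assume "y \<in> nbhd E (vs ! 0)"
    then have y: "{vs ! 0, y} \<in> E" unfolding nbhd_def by simp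
    then have "y \<in> V" "y \<noteq> vs ! 0" using simple_graph_edgeD[OF sg y] by auto
    show "y \<in> {vs ! 1}"
    proof (cases "y \<in> set vs")
      case False
      then have "is_path E (y # vs)"
        using is_path_Cons[OF path(2) False] y by (simp add: insert_commute)
      then show ?thesis
        using longest[of "y # vs"] path(1) \<open>y \<in> V\<close> by simp
    next
      case True
      then obtain j where j: "j < length vs" "vs ! j = y" by (meson in_set_conv_nth)
      have "set (take (Suc j) vs) \<subseteq> V" using path(1) by (meson order_trans set_take_subset)
      moreover have "{vs ! j, vs ! 0} \<in> E" using y j(2) by (simp add: insert_commute)
      ultimately have "\<not> 2 \<le> j"
        using is_cycle_take_path[OF path(2) _ j(1)] ac unfolding acyclic_graph_def by blast
      then have "j = 1" using j \<open>y \<noteq> vs ! 0\<close> by (cases j) auto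
      then show ?thesis using j by simp
    qed
  next
    fix y assume "y \<in> {vs ! 1}"
    then show "y \<in> nbhd E (vs ! 0)"
      using path(2,3) unfolding is_path_def nbhd_def by auto
  qed
  ultimately show ?thesis by blast
qed

lemma connected_graph_remove_leaf:
  assumes sg: "simple_graph V E" and cg: "connected_graph V E" and leaf: "nbhd E l = {w}"
  shows "connected_graph (V - {l}) {e \<in> E. l \<notin> e}"
proof -
  let ?R = "{(x, y). {x, y} \<in> E}"
  let ?R' = "{(x, y). {x, y} \<in> {e \<in> E. l \<notin> e}}"
  have "w \<noteq> l"
    using leaf simple_graph_edgeD[OF sg, of l w] unfolding nbhd_def by auto
  txt \<open>Since \<open>w\<close> is the only neighbour of \<open>l\<close>, a walk can wait at \<open>w\<close> instead of visiting \<open>l\<close>.\<close>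
  have avoid_l: "(x, y) \<in> ?R\<^sup>* \<Longrightarrow> x \<noteq> l \<Longrightarrow> (x, if y = l then w else y) \<in> ?R'\<^sup>*" for x y
  proof (induction rule: rtrancl_induct)
    case base
    then show ?case by simp
  next
    case (step y z)
    then have yz: "{y, z} \<in> E" and IH: "(x, if y = l then w else y) \<in> ?R'\<^sup>*" by simp_all
    consider "y = l" | "z = l" | "y \<noteq> l" "z \<noteq> l" by blast
    then show ?case
    proof cases
      case 1
      then have "z = w" using yz leaf unfolding nbhd_def by auto
      then show ?thesis using IH 1 \<open>w \<noteq> l\<close> by simp
    next
      case 2
      then have "{l, y} \<in> E" using yz by (simp add: insert_commute)
      then have "y = w" using leaf unfolding nbhd_def by blast
      then show ?thesis using IH 2 \<open>w \<noteq> l\<close> by simp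
    next
      case 3
      have "(x, y) \<in> ?R'\<^sup>*" using IH 3 by simp
      moreover have "(y, z) \<in> ?R'" using yz 3 by simp
      ultimately have "(x, z) \<in> ?R'\<^sup>*" by (rule rtrancl_into_rtrancl)
      then show ?thesis using 3 by simp
    qed
  qed
  show ?thesis
    unfolding connected_graph_def
  proof (intro ballI)
    fix u v assume "u \<in> V - {l}" "v \<in> V - {l}"
    then show "(u, v) \<in> ?R'\<^sup>*" using avoid_l[of u v] cg unfolding connected_graph_def by auto
  qed
qed

lemma is_tree_remove_leaf:
  assumes tree: "is_tree V E" and leaf: "nbhd E l = {w}"
  shows "is_tree (V - {l}) {e \<in> E. l \<notin> e}"
proof -
  have sg: "simple_graph V E" and cg: "connected_graph V E" and ac: "acyclic_graph V E"
    using tree unfolding is_tree_def by simp_all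
  have "{l, w} \<in> E"
    using leaf unfolding nbhd_def by auto
  then have "w \<in> V - {l}"
    using simple_graph_edgeD[OF sg \<open>{l, w} \<in> E\<close>] by auto
  moreover have "simple_graph (V - {l}) {e \<in> E. l \<notin> e}"
    using sg unfolding simple_graph_def by auto
  moreover have "acyclic_graph (V - {l}) {e \<in> E. l \<notin> e}"
  proof -
    have "is_cycle E vs" if "is_cycle {e \<in> E. l \<notin> e} vs" for vs
      using that unfolding is_cycle_def by simp
    then show ?thesis
      using ac unfolding acyclic_graph_def by blast
  qed
  ultimately show ?thesis
    using connected_graph_remove_leaf[OF sg cg leaf] unfolding is_tree_def by blast
qed

text \<open>\<open>depth\<close> need not be the distance to the root; it only has to decrease along \<open>parent\<close>,
  which makes the parent relation well founded.\<close>
locale rooted_tree =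
  fixes V :: "'a set" and E :: "'a set set" and r :: 'a
    and parent :: "'a \<Rightarrow> 'a" and depth :: "'a \<Rightarrow> nat"
  assumes simple: "simple_graph V E" and root_in_V: "r \<in> V"
    and parent_in_V: "\<And>v. v \<in> V \<Longrightarrow> v \<noteq> r \<Longrightarrow> parent v \<in> V"
    and parent_edge: "\<And>v. v \<in> V \<Longrightarrow> v \<noteq> r \<Longrightarrow> {v, parent v} \<in> E"
    and depth_parent: "\<And>v. v \<in> V \<Longrightarrow> v \<noteq> r \<Longrightarrow> depth v = Suc (depth (parent v))"
    and edge_parent: "\<And>e. e \<in> E \<Longrightarrow> \<exists>v\<in>V. v \<noteq> r \<and> e = {v, parent v}"

lemma rooted_tree_add_leaf:
  assumes T: "rooted_tree (V - {l}) {e \<in> E. l \<notin> e} r parent depth"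
    and sg: "simple_graph V E" and leaf: "nbhd E l = {w}"
  shows "rooted_tree V E r (parent(l := w)) (depth(l := Suc (depth w)))"
proof -
  interpret T: rooted_tree "V - {l}" "{e \<in> E. l \<notin> e}" r parent depth by (rule T)
  have lw: "{l, w} \<in> E"
    using leaf unfolding nbhd_def by auto
  then have w: "w \<in> V - {l}" and "l \<in> V"
    using simple_graph_edgeD[OF sg lw] by auto
  have r: "r \<in> V" "r \<noteq> l"
    using T.root_in_V by auto
  show ?thesis
  proof unfold_locales
    fix v assume v: "v \<in> V" "v \<noteq> r"
    show "(parent(l := w)) v \<in> V" "{v, (parent(l := w)) v} \<in> E"
      "(depth(l := Suc (depth w))) v = Suc ((depth(l := Suc (depth w))) ((parent(l := w)) v))"
      using v w lw T.parent_in_V[of v] T.parent_edge[of v] T.depth_parent[of v] by auto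
  next
    fix e assume e: "e \<in> E"
    show "\<exists>v\<in>V. v \<noteq> r \<and> e = {v, (parent(l := w)) v}"
    proof (cases "l \<in> e")
      case True
      then obtain u where "e = {l, u}"
        using e sg card_2_member_eq unfolding simple_graph_def by metis
      then have "e = {l, w}"
        using e leaf unfolding nbhd_def by auto
      then show ?thesis using \<open>l \<in> V\<close> r by auto
    next
      case False
      then obtain v where "v \<in> V - {l}" "v \<noteq> r" "e = {v, parent v}"
        using e T.edge_parent by blast
      then show ?thesis by auto
    qed
  qed (use sg r in auto)
qed

lemma ex_rooted_tree: "is_tree V E \<Longrightarrow> \<exists>r parent depth. rooted_tree V E r parent depth"
proof (induction "card V" arbitrary: V E rule: less_induct)
  case less
  have sg: "simple_graph V E" and "V \<noteq> {}" and cg: "connected_graph V E" and ac: "acyclic_graph V E"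
    using less.prems unfolding is_tree_def by auto
  show ?case
  proof (cases "E = {}")
    case True
    obtain r where r: "r \<in> V" using \<open>V \<noteq> {}\<close> by blast
    have "V = {r}"
      using cg r True unfolding connected_graph_def by (auto elim: converse_rtranclE)
    then have "rooted_tree V E r id (\<lambda>_. 0)"
      using sg True by unfold_locales auto
    then show ?thesis by blast
  next
    case False
    obtain l w where l: "l \<in> V" and leaf: "nbhd E l = {w}"
      using acyclic_ex_leaf[OF sg ac False] by blast
    have "finite V"
      using sg unfolding simple_graph_def by simp
    then have "card (V - {l}) < card V"
      using l by (rule card_Diff1_less)
    then obtain r parent depth where "rooted_tree (V - {l}) {e \<in> E. l \<notin> e} r parent depth"
      using less.hyps is_tree_remove_leaf[OF less.prems leaf] by blast
    then show ?thesis
      using rooted_tree_add_leaf[OF _ sg leaf] by blast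
  qed
qed

context rooted_tree
begin

definition children :: "'a \<Rightarrow> 'a set" where
  "children v = {u \<in> V. u \<noteq> r \<and> parent u = v}"

lemma finite_V: "finite V"
  using simple unfolding simple_graph_def by simp

lemma finite_children: "finite (children v)"
  using finite_V unfolding children_def by simp

lemma in_children_parent: "v \<in> V \<Longrightarrow> v \<noteq> r \<Longrightarrow> v \<in> children (parent v)"
  unfolding children_def by simp

lemma parent_neq: "v \<in> V \<Longrightarrow> v \<noteq> r \<Longrightarrow> parent v \<noteq> v"
  using depth_parent[of v] by auto

lemma parent_notin_children: "v \<in> V \<Longrightarrow> v \<noteq> r \<Longrightarrow> parent v \<notin> children v"
  using depth_parent[of v] depth_parent[of "parent v"] unfolding children_def by auto

lemma nbhd_eq: "v \<in> V \<Longrightarrow> nbhd E v = children v \<union> (if v = r then {} else {parent v})"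
proof (intro set_eqI iffI)
  fix u assume "v \<in> V" "u \<in> nbhd E v"
  then obtain w where w: "w \<in> V" "w \<noteq> r" "{v, u} = {w, parent w}"
    using edge_parent unfolding nbhd_def by (metis mem_Collect_eq)
  then show "u \<in> children v \<union> (if v = r then {} else {parent v})"
    unfolding children_def by (auto simp: doubleton_eq_iff)
next
  fix u assume "v \<in> V" "u \<in> children v \<union> (if v = r then {} else {parent v})"
  then show "u \<in> nbhd E v"
    using parent_edge[of u] parent_edge[of v] unfolding children_def nbhd_def
    by (auto simp: insert_commute split: if_splits)
qed

lemma deg_eq: "v \<in> V \<Longrightarrow> deg E v = card (children v) + (if v = r then 0 else 1)"
  using nbhd_eq[of v] parent_notin_children[of v] finite_children[of v]
  unfolding deg_def by auto

lemma parent_edge_inj: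
  assumes "w \<in> V" "w \<noteq> r" "w' \<in> V" "w' \<noteq> r" "{w, parent w} = {w', parent w'}"
  shows "w = w'"
  using assms depth_parent[of w] depth_parent[of w'] by (auto simp: doubleton_eq_iff)

lemma subset_if_closed_under_children:
  assumes "r \<in> A" "\<And>u. u \<in> V \<Longrightarrow> u \<noteq> r \<Longrightarrow> parent u \<in> A \<Longrightarrow> u \<in> A"
  shows "V \<subseteq> A"
proof -
  have "u \<in> A" if "u \<in> V" "depth u = n" for u n
    using that
  proof (induction n arbitrary: u rule: less_induct)
    case (less n)
    then show ?case
      using assms parent_in_V[of u] depth_parent[of u] by (cases "u = r") auto
  qed
  then show ?thesis by blast
qed

lemma ex_leaf:
  assumes "3 \<le> card V"
  shows "\<exists>v\<in>V. v \<noteq> r \<and> children v = {}"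
proof -
  have "\<not> V \<subseteq> {r}"
    using assms card_mono[of "{r}" V] by auto
  then have "depth ` (V - {r}) \<noteq> {}" by blast
  then have "Max (depth ` (V - {r})) \<in> depth ` (V - {r})"
    using finite_V by (intro Max_in) simp_all
  then obtain v where v: "v \<in> V - {r}" "depth v = Max (depth ` (V - {r}))"
    by (metis imageE)
  have "children v = {}"
  proof (rule ccontr)
    assume "children v \<noteq> {}"
    then obtain u where u: "u \<in> V - {r}" "parent u = v"
      unfolding children_def by auto
    then have "depth u \<le> depth v"
      using v(2) finite_V by simp
    then show False
      using u depth_parent[of u] by simp
  qed
  then show ?thesis using v by blast
qed

lemma leaf_parent_deg:
  assumes card: "3 \<le> card V" and v: "v \<in> V" "v \<noteq> r" and leaf: "children v = {}"
  shows "2 \<le> deg E (parent v)"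
proof (rule ccontr)
  assume deg: "\<not> 2 \<le> deg E (parent v)"
  have "v \<in> children (parent v)"
    using in_children_parent[OF v] .
  then have "1 \<le> card (children (parent v))"
    using finite_children card_0_eq[of "children (parent v)"] by fastforce
  then have "parent v = r" "card (children r) \<le> 1"
    using deg deg_eq[OF parent_in_V[OF v]] by (auto split: if_splits)
  then have root_children: "children r = {v}"
    using \<open>v \<in> children (parent v)\<close> finite_children card_le_Suc0_iff_eq[of "children r"] by auto
  have "V \<subseteq> {r, v}"
  proof (rule subset_if_closed_under_children)
    fix u assume "u \<in> V" "u \<noteq> r" "parent u \<in> {r, v}"
    then show "u \<in> {r, v}"
      using in_children_parent[of u] root_children leaf by auto
  qed simp
  then have "card V \<le> card {r, v}"
    by (simp add: card_mono)
  also have "\<dots> \<le> 2"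
    by (cases "r = v") auto
  finally show False
    using card by simp
qed

lemma ex_deg_ge_2: "3 \<le> card V \<Longrightarrow> \<exists>u\<in>V. 2 \<le> deg E u"
  using ex_leaf leaf_parent_deg parent_in_V by blast

end

section \<open>Colouring a rooted tree from the root downwards\<close>

context rooted_tree
begin

definition child_list :: "'a \<Rightarrow> 'a list" where
  "child_list v = (SOME xs. set xs = children v \<and> distinct xs)"

lemma set_child_list: "set (child_list v) = children v"
  and distinct_child_list: "distinct (child_list v)"
  using someI_ex[OF finite_distinct_list[OF finite_children[of v]]]
  unfolding child_list_def by blast+

lemma length_child_list: "length (child_list v) = card (children v)"
  using distinct_card[OF distinct_child_list] set_child_list by simp

text \<open>A colouring of the edges is encoded by \<open>g\<close>, where \<open>g v\<close> is the colour of the edge from \<open>v\<close>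
  to its parent; \<open>local_colors g v\<close> lists the colours of the edges at \<open>v\<close>.\<close>
definition local_colors :: "('a \<Rightarrow> nat) \<Rightarrow> 'a \<Rightarrow> nat list" where
  "local_colors g v = (if v = r then [] else [g v]) @ map g (child_list v)"

definition edge_color :: "('a \<Rightarrow> nat) \<Rightarrow> 'a set \<Rightarrow> nat" where
  "edge_color g e = g (THE w. w \<in> V \<and> w \<noteq> r \<and> e = {w, parent w})"

lemma edge_color_parent: "w \<in> V \<Longrightarrow> w \<noteq> r \<Longrightarrow> edge_color g {w, parent w} = g w"
  unfolding edge_color_def using parent_edge_inj
  by (intro arg_cong[where f = g] the_equality) auto

lemma edge_color_child: "u \<in> children v \<Longrightarrow> edge_color g {v, u} = g u"
  using edge_color_parent[of u] unfolding children_def by (auto simp: insert_commute)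

lemma length_local_colors: "v \<in> V \<Longrightarrow> length (local_colors g v) = deg E v"
  unfolding local_colors_def using deg_eq length_child_list by simp

lemma sum_nbhd_edge_color:
  assumes v: "v \<in> V"
  shows "(\<Sum>u\<in>nbhd E v. F (edge_color g {v, u})) = (\<Sum>x\<leftarrow>local_colors g v. F x)"
proof -
  have "(\<Sum>u\<in>children v. F (edge_color g {v, u})) = (\<Sum>u\<in>children v. F (g u))"
    by (simp add: edge_color_child)
  also have "\<dots> = (\<Sum>x\<leftarrow>map g (child_list v). F x)"
    using sum_list_distinct_conv_sum_set[OF distinct_child_list, of "F \<circ> g"]
    by (simp add: set_child_list comp_def)
  finally have children: "(\<Sum>u\<in>children v. F (edge_color g {v, u})) = (\<Sum>x\<leftarrow>map g (child_list v). F x)" .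
  show ?thesis
  proof (cases "v = r")
    case True
    then show ?thesis using children nbhd_eq[OF v] unfolding local_colors_def by simp
  next
    case False
    then show ?thesis
      using children nbhd_eq[OF v] parent_notin_children[OF v] finite_children edge_color_parent[OF v]
      unfolding local_colors_def by (simp add: insert_commute)
  qed
qed

lemma sigma_edge_color: "v \<in> V \<Longrightarrow> sigma E (edge_color g) v = sum_list (local_colors g v)"
  using sum_nbhd_edge_color[of v "\<lambda>x. x"] unfolding sigma_def by simp

lemma card_edge_color_eq:
  assumes "v \<in> V"
  shows "card {u \<in> nbhd E v. edge_color g {v, u} = i} = count_list (local_colors g v) i"
proof -
  have "finite (nbhd E v)"
    using nbhd_eq[OF assms] finite_children by simp
  then have "card {u \<in> nbhd E v. edge_color g {v, u} = i}
      = (\<Sum>u\<in>nbhd E v. if edge_color g {v, u} = i then 1 else 0)"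
    by (simp add: sum.inter_filter[symmetric])
  then show ?thesis
    using sum_nbhd_edge_color[OF assms, of "\<lambda>x. if x = i then 1 else (0::nat)"]
    by (simp add: count_list_eq_sum_list)
qed

definition locally_good :: "nat set \<Rightarrow> ('a \<Rightarrow> nat) \<Rightarrow> 'a \<Rightarrow> bool" where
  "locally_good P g v \<longleftrightarrow> set (local_colors g v) \<subseteq> P \<and> qm_list (local_colors g v) \<and>
     (v \<noteq> r \<longrightarrow> sum_list (local_colors g v) \<noteq> sum_list (local_colors g (parent v)))"

lemma qm_nsd_edge_color:
  assumes good: "\<forall>v\<in>V. locally_good P g v"
  shows "\<forall>e\<in>E. edge_color g e \<in> P" "quasi_majority V E (edge_color g)" "nsd E (edge_color g)"
proof -
  show "\<forall>e\<in>E. edge_color g e \<in> P"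
  proof
    fix e assume "e \<in> E"
    then obtain w where w: "w \<in> V" "w \<noteq> r" "e = {w, parent w}"
      using edge_parent by blast
    then have "g w \<in> set (local_colors g w)"
      unfolding local_colors_def by simp
    then show "edge_color g e \<in> P"
      using good w edge_color_parent unfolding locally_good_def by auto
  qed
  show "quasi_majority V E (edge_color g)"
    using good card_edge_color_eq length_local_colors
    unfolding quasi_majority_def locally_good_def qm_list_def nat_ceiling_half by metis
  show "nsd E (edge_color g)"
    unfolding nsd_def
  proof (intro allI impI)
    fix u v assume "{u, v} \<in> E"
    then obtain w where w: "w \<in> V" "w \<noteq> r" "{u, v} = {w, parent w}"
      using edge_parent by metis
    then have "sigma E (edge_color g) w \<noteq> sigma E (edge_color g) (parent w)"
      using good parent_in_V[OF w(1,2)] sigma_edge_color unfolding locally_good_def by metis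
    then show "sigma E (edge_color g) u \<noteq> sigma E (edge_color g) v"
      using w(3) by (metis doubleton_eq_iff)
  qed
qed

lemma local_colors_eq_outside:
  assumes "\<forall>u. u \<notin> children v \<longrightarrow> g' u = g u" "x \<noteq> v" "x \<notin> children v"
  shows "local_colors g' x = local_colors g x"
proof -
  have "children x \<inter> children v = {}"
    using assms(2) unfolding children_def by auto
  then show ?thesis
    using assms unfolding local_colors_def set_child_list[symmetric] by auto
qed

text \<open>In \<open>child_colors\<close>, \<open>ys\<close> are the colours at the parent of \<open>v\<close> and \<open>a\<close> is the colour of the
  edge between them; \<open>xs\<close> are the colours chosen for the edges from \<open>v\<close> to its children.\<close>
context
  fixes P :: "nat set"
  assumes three_vertices: "3 \<le> card V" and positive: "0 \<notin> P"
    and root_colors: "\<exists>xs. length xs = deg E r \<and> set xs \<subseteq> P \<and> qm_list xs"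
    and child_colors: "\<And>v a ys. v \<in> V \<Longrightarrow> v \<noteq> r \<Longrightarrow> 2 \<le> deg E v \<Longrightarrow> a \<in> set ys \<Longrightarrow>
      set ys \<subseteq> P \<Longrightarrow> qm_list ys \<Longrightarrow> length ys = deg E (parent v) \<Longrightarrow>
      \<exists>xs. length xs = deg E v - 1 \<and> set xs \<subseteq> P \<and> qm_list (a # xs) \<and> sum_list (a # xs) \<noteq> sum_list ys"
begin

lemma ex_children_colors:
  assumes v: "v \<in> V" and parent_good: "v \<noteq> r \<Longrightarrow> locally_good P g (parent v)"
  defines "pre \<equiv> if v = r then [] else [g v]"
  shows "\<exists>xs. length xs = card (children v) \<and> set (pre @ xs) \<subseteq> P \<and> qm_list (pre @ xs) \<and>
    (v \<noteq> r \<longrightarrow> sum_list (pre @ xs) \<noteq> sum_list (local_colors g (parent v)))"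
proof (cases "v = r")
  case True
  then show ?thesis
    using root_colors deg_eq[OF v] unfolding pre_def by simp
next
  case False
  let ?ys = "local_colors g (parent v)"
  have ys: "g v \<in> set ?ys" "set ?ys \<subseteq> P" "qm_list ?ys" "length ?ys = deg E (parent v)"
    using in_children_parent[OF v False] parent_good[OF False] parent_in_V[OF v False]
      length_local_colors set_child_list
    unfolding local_colors_def locally_good_def by auto
  show ?thesis
  proof (cases "children v = {}")
    case True
    have "sum_list ?ys \<noteq> g v"
      using sum_list_neq_member[OF ys(1)] ys(2,4) leaf_parent_deg[OF three_vertices v False True]
        positive by auto
    then show ?thesis
      using True False ys unfolding pre_def qm_list_def by auto
  next
    case inner: False
    then have "2 \<le> deg E v"
      using deg_eq[OF v] False finite_children card_0_eq by fastforce
    then show ?thesis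
      using child_colors[OF v False _ ys] deg_eq[OF v] False ys(1,2) unfolding pre_def by auto
  qed
qed

lemma ex_locally_good_update:
  assumes v: "v \<in> V" and parent_good: "v \<noteq> r \<Longrightarrow> locally_good P g (parent v)"
  shows "\<exists>g'. (\<forall>u. u \<notin> children v \<longrightarrow> g' u = g u) \<and> locally_good P g' v"
proof -
  define pre where "pre = (if v = r then [] else [g v])"
  obtain xs where xs: "length xs = card (children v)"
    and good: "set (pre @ xs) \<subseteq> P" "qm_list (pre @ xs)"
      "v \<noteq> r \<longrightarrow> sum_list (pre @ xs) \<noteq> sum_list (local_colors g (parent v))"
    using ex_children_colors[OF v parent_good] unfolding pre_def by blast
  obtain f where f: "map f (child_list v) = xs"
    using ex_map_eq[OF distinct_child_list] xs length_child_list by metis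
  define g' where "g' u = (if u \<in> children v then f u else g u)" for u
  have outside: "\<forall>u. u \<notin> children v \<longrightarrow> g' u = g u"
    unfolding g'_def by simp
  have "v \<notin> children v"
    using parent_neq unfolding children_def by auto
  then have "local_colors g' v = pre @ xs"
    using f set_child_list unfolding local_colors_def g'_def pre_def by (auto intro: map_cong)
  moreover have "local_colors g' (parent v) = local_colors g (parent v)" if "v \<noteq> r"
    using local_colors_eq_outside[OF outside] parent_neq[OF v that] parent_notin_children[OF v that]
    by simp
  ultimately have "locally_good P g' v"
    using good unfolding locally_good_def by auto
  then show ?thesis using outside by blast
qed

lemma ex_locally_good_insert:
  assumes good: "\<forall>w\<in>A. locally_good P g w" and v: "v \<in> V" "v \<notin> A"
    and closed: "\<And>w. w \<in> A \<Longrightarrow> w \<noteq> r \<Longrightarrow> parent w \<in> A"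
    and parent_v: "v \<noteq> r \<Longrightarrow> parent v \<in> A" and no_child: "\<forall>w\<in>A. w \<notin> children v"
  shows "\<exists>g'. \<forall>w\<in>insert v A. locally_good P g' w"
proof -
  obtain g' where g': "\<forall>u. u \<notin> children v \<longrightarrow> g' u = g u" "locally_good P g' v"
    using ex_locally_good_update[OF v(1)] good parent_v by blast
  have same: "local_colors g' x = local_colors g x" if "x \<in> A" for x
  proof -
    have "x \<noteq> v"
      using that v(2) by blast
    then show ?thesis
      using local_colors_eq_outside[OF g'(1)] that no_child by blast
  qed
  have "locally_good P g' w" if "w \<in> A" for w
    using good same closed that unfolding locally_good_def by auto
  then show ?thesis
    using g'(2) by blast
qed

lemma ex_locally_good_on:
  assumes "A \<subseteq> V" "\<And>v. v \<in> A \<Longrightarrow> v \<noteq> r \<Longrightarrow> parent v \<in> A"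
  shows "\<exists>g. \<forall>v\<in>A. locally_good P g v"
proof -
  have "finite A"
    using assms(1) finite_V by (rule finite_subset)
  then show ?thesis
    using assms
  proof (induction A rule: finite_ranking_induct[where f = depth])
    case empty
    then show ?case by simp
  next
    case (insert v A)
    have no_child: "\<forall>w\<in>A. w \<notin> children v"
      using insert.hyps(2) depth_parent unfolding children_def by fastforce
    have closed: "parent w \<in> A" if "w \<in> A" "w \<noteq> r" for w
      using insert.prems that no_child in_children_parent[of w] by blast
    obtain g where g: "\<forall>w\<in>A. locally_good P g w"
      using insert.IH insert.prems(1) closed by blast
    show ?case
    proof (cases "v \<in> A")
      case True
      then show ?thesis
        using g by (metis insert_absorb)
    next
      case False
      have "v \<in> V"
        using insert.prems(1) by simp
      moreover have "parent v \<in> A" if "v \<noteq> r"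
        using insert.prems parent_neq[OF \<open>v \<in> V\<close> that] that by blast
      ultimately show ?thesis
        using ex_locally_good_insert[OF g _ False closed] no_child by blast
    qed
  qed
qed

lemma ex_qm_nsd_coloring: "\<exists>c. (\<forall>e\<in>E. c e \<in> P) \<and> quasi_majority V E c \<and> nsd E c"
  using ex_locally_good_on[of V] parent_in_V qm_nsd_edge_color by blast

end

end

lemma tree_qm_nsd_coloring:
  assumes tree: "is_tree V E" and card: "3 \<le> card V" and positive: "0 \<notin> P"
    and root_colors: "\<And>m. \<exists>xs. length xs = m \<and> set xs \<subseteq> P \<and> qm_list xs"
    and child_colors: "\<And>u v a ys. {u, v} \<in> E \<Longrightarrow> 2 \<le> deg E v \<Longrightarrow> a \<in> set ys \<Longrightarrow>
      set ys \<subseteq> P \<Longrightarrow> qm_list ys \<Longrightarrow> length ys = deg E u \<Longrightarrow>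
      \<exists>xs. length xs = deg E v - 1 \<and> set xs \<subseteq> P \<and> qm_list (a # xs) \<and> sum_list (a # xs) \<noteq> sum_list ys"
  shows "\<exists>c. (\<forall>e\<in>E. c e \<in> P) \<and> quasi_majority V E c \<and> nsd E c"
proof -
  obtain r parent depth where "rooted_tree V E r parent depth"
    using ex_rooted_tree[OF tree] by blast
  then interpret rooted_tree V E r parent depth .
  have "{parent v, v} \<in> E" if "v \<in> V" "v \<noteq> r" for v
    using parent_edge[OF that] by (simp add: insert_commute)
  then show ?thesis
    using ex_qm_nsd_coloring[OF card positive root_colors] child_colors by blast
qed

lemma tree_qm_nsd_colorable_3:
  assumes "is_tree V E" "3 \<le> card V"
  shows "qm_nsd_colorable V E 3"
proof -
  have "\<exists>c. (\<forall>e\<in>E. c e \<in> {1, 2, 3}) \<and> quasi_majority V E c \<and> nsd E c"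
  proof (rule tree_qm_nsd_coloring[OF assms])
    show "\<exists>xs. length xs = m \<and> set xs \<subseteq> {1, 2, 3} \<and> qm_list xs" for m
      using ex_qm_list_12[of m] by auto
    show "\<exists>xs. length xs = deg E v - 1 \<and> set xs \<subseteq> {1, 2, 3} \<and> qm_list (a # xs)
        \<and> sum_list (a # xs) \<noteq> sum_list ys"
      if "2 \<le> deg E v" "a \<in> set ys" "set ys \<subseteq> {1, 2, 3}" for v a ys
      using ex_qm_list_123_avoiding[of a "deg E v - 1"] that by auto
  qed simp
  moreover have "{1..3 :: nat} = {1, 2, 3}" by auto
  ultimately show ?thesis
    unfolding qm_nsd_colorable_def edge_coloring_def by simp
qed

lemma tree_qm_nsd_colorable_2:
  assumes "is_tree V E" "3 \<le> card V"
    and no_equal_even: "\<And>u v. {u, v} \<in> E \<Longrightarrow> deg E u = deg E v \<Longrightarrow> odd (deg E u)"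
  shows "qm_nsd_colorable V E 2"
proof -
  have "\<exists>c. (\<forall>e\<in>E. c e \<in> {1, 2}) \<and> quasi_majority V E c \<and> nsd E c"
  proof (rule tree_qm_nsd_coloring[OF assms(1,2)])
    show "\<exists>xs. length xs = m \<and> set xs \<subseteq> {1, 2} \<and> qm_list xs" for m
      by (rule ex_qm_list_12)
    fix u v a ys
    assume uv: "{u, v} \<in> E" and deg: "2 \<le> deg E v" and ys: "a \<in> set ys" "set ys \<subseteq> {1, 2}"
      "qm_list ys" "length ys = deg E u"
    have "2 * sum_list ys \<noteq> 3 * deg E v" if "even (deg E v)"
    proof
      assume "2 * sum_list ys = 3 * deg E v"
      then have "deg E u = deg E v"
        using qm_list_12_sum_bounds[OF ys(2,3)] ys(4) by linarith
      then show False
        using no_equal_even[OF uv] that by simp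
    qed
    then show "\<exists>xs. length xs = deg E v - 1 \<and> set xs \<subseteq> {1, 2} \<and> qm_list (a # xs)
        \<and> sum_list (a # xs) \<noteq> sum_list ys"
      using ex_qm_list_12_avoiding[of a "deg E v - 1"] deg ys(1,2) by auto
  qed simp
  moreover have "{1..2 :: nat} = {1, 2}" by auto
  ultimately show ?thesis
    unfolding qm_nsd_colorable_def edge_coloring_def by simp
qed

lemma tree_ex_deg_ge_2:
  assumes "is_tree V E" "3 \<le> card V"
  shows "\<exists>v\<in>V. 2 \<le> deg E v"
proof -
  obtain r parent depth where "rooted_tree V E r parent depth"
    using ex_rooted_tree[OF assms(1)] by blast
  then show ?thesis
    using rooted_tree.ex_deg_ge_2[OF _ assms(2)] by blast
qed

theorem mainTheorem6:
  fixes V :: "'a set" and E :: "'a set set"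
  assumes "is_tree V E" and "card V \<ge> 3"
  shows "chi_qm_sigma V E =
           (if \<not> (\<exists>u v. {u, v} \<in> E \<and> deg E u = deg E v \<and> even (deg E u)) then 2 else 3)"
proof -
  have simple: "simple_graph V E"
    using assms(1) unfolding is_tree_def by simp
  obtain w where w: "w \<in> V" "2 \<le> deg E w"
    using tree_ex_deg_ge_2[OF assms] by blast
  have below_2: "\<not> qm_nsd_colorable V E k" if "k < 2" for k
    using not_qm_nsd_colorable_lt_2[OF w that] .
  show ?thesis
  proof (cases "\<exists>u v. {u, v} \<in> E \<and> deg E u = deg E v \<and> even (deg E u)")
    case True
    then have "\<not> qm_nsd_colorable V E 2"
      using not_qm_nsd_colorable_2[OF simple] by blast
    then have "\<not> qm_nsd_colorable V E k" if "k < 3" for k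
      using below_2[of k] qm_nsd_colorable_mono[of V E k 2] that by linarith
    then have "chi_qm_sigma V E = 3"
      by (rule chi_qm_sigma_eqI[OF tree_qm_nsd_colorable_3[OF assms]])
    then show ?thesis
      using True by simp
  next
    case False
    then have "qm_nsd_colorable V E 2"
      using tree_qm_nsd_colorable_2[OF assms] by blast
    then have "chi_qm_sigma V E = 2"
      using below_2 by (rule chi_qm_sigma_eqI)
    then show ?thesis
      using False by simp
  qed
qed

end
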